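(* Let $p$ be a prime, $A$ a torsion-free $\mathbb{Z}_{(p)}$-algebra, $\mathfrak a\subseteq A$ a divided-power ideal, and $P,Q\in A[X]$ monic polynomials. The following are equivalent: (1) $e_n(P)\equiv e_n(Q)\pmod{\mathfrak a}$ for every $n\ge1$; (2) $e_n(P)\equiv e_n(Q)\pmod{\mathfrak a}$ for every $n$ with $1\le n\le\max\{\deg P,\deg Q\}$; (3) $p_n(P)\equiv p_n(Q)\pmod{n\mathfrak a}$ for every $n\ge 1$; (4) $p_n(P)\equiv p_n(Q)\pmod{n\mathfrak a}$ for every $n$ with $1\le n\le\max\{\deg P,\deg Q\}$.
   Context: $\mathbb{Z}_{(p)}\subseteq\mathbb{Q}$ is the ring of rationals $a/b$ with $p\nmid b$. An ideal $\mathfrak a$ of a torsion-free $\mathbb{Z}_{(p)}$-algebra $A$ is a divided-power ideal if $a^p\in p\,\mathfrak a$ for all $a\in\mathfrak a$ (equivalently $a^k/k!\in\mathfrak a$ in $A\otimes\mathbb{Q}$ for all $a\in\mathfrak a$, $k\ge1$). For a monic $P=X^d+a_1X^{d-1}+\dots+a_d\in A[X]$: $e_0(P)=1$, $e_n(P)=(-1)^na_n$ for $1\le n\le d$, $e_n(P)=0$ for $n>d$; and $p_n(P)$ for $n\ge1$ is defined recursively by Newton's identities $p_n(P)=\sum_{i=1}^{n-1}(-1)^{i-1}e_i(P)p_{n-i}(P)+(-1)^{n-1}n\,e_n(P)$ (when $A$ is a domain, $p_n(P)=\sum_i\alpha_i^n$ over the roots $\alpha_i$ of $P$ with multiplicity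 in an extension). $n\mathfrak a$ denotes the ideal $\{na: a\in\mathfrak a\}$. *)

theory Defs
  imports "HOL-Computational_Algebra.Polynomial" "HOL-Computational_Algebra.Primes"
begin

text \<open>A (commutative) ring is a torsion-free Z_(p)-algebra iff every integer not divisible
  by p is invertible in it (this gives the unique ring map Z_(p) -> A) and it is
  torsion-free as an abelian group.\<close>
definition torsion_free_Zp_algebra :: "nat \<Rightarrow> 'a::comm_ring_1 itself \<Rightarrow> bool" where
  "torsion_free_Zp_algebra p _ \<longleftrightarrow>
     (\<forall>n::int. \<not> int p dvd n \<longrightarrow> (\<exists>b::'a. of_int n * b = 1)) \<and>
     (\<forall>(n::int) (a::'a). n \<noteq> 0 \<longrightarrow> of_int n * a = 0 \<longrightarrow> a = 0)"

definition is_ideal :: "'a::comm_ring_1 set \<Rightarrow> bool" where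
  "is_ideal I \<longleftrightarrow> 0 \<in> I \<and> (\<forall>x\<in>I. \<forall>y\<in>I. x + y \<in> I) \<and> (\<forall>r. \<forall>x\<in>I. r * x \<in> I)"

definition nat_mult_set :: "nat \<Rightarrow> 'a::comm_ring_1 set \<Rightarrow> 'a set" where
  "nat_mult_set n I = {of_nat n * a | a. a \<in> I}"

definition divided_power_ideal :: "nat \<Rightarrow> 'a::comm_ring_1 set \<Rightarrow> bool" where
  "divided_power_ideal p I \<longleftrightarrow> is_ideal I \<and> (\<forall>a\<in>I. a ^ p \<in> nat_mult_set p I)"

text \<open>Elementary symmetric functions of the roots of a monic polynomial:
  e_n(P) = (-1)^n a_n for P = X^d + a_1 X^(d-1) + ... + a_d, e_0 = 1, e_n = 0 for n > d.\<close>
definition esym :: "'a::comm_ring_1 poly \<Rightarrow> nat \<Rightarrow> 'a" where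
  "esym P n = (if n \<le> degree P then (-1) ^ n * coeff P (degree P - n) else 0)"

text \<open>Power sums via Newton's identities (p_0 is not used; set to 0).\<close>
function psum :: "'a::comm_ring_1 poly \<Rightarrow> nat \<Rightarrow> 'a" where
  "psum P n = (if n = 0 then 0 else
     (\<Sum>i\<in>{1..<n}. (-1) ^ (i - 1) * esym P i * psum P (n - i))
     + (-1) ^ (n - 1) * of_nat n * esym P n)"
  by auto
termination by (relation "measure snd") auto

declare psum.simps[simp del]

end

theory Submission
  imports Defs "HOL-Computational_Algebra.Formal_Power_Series"
begin

unbundle fps_syntax

text \<open>Put \<open>E\<^sub>P = \<Sum>\<^sub>n (-1)\<^sup>n e\<^sub>n(P) X\<^sup>n\<close> and \<open>S\<^sub>P = \<Sum>\<^sub>n p\<^sub>n(P) X\<^sup>n\<close>. For the Euler derivation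
  \<open>\<theta> = X d/dX\<close>, Newton's identities say \<open>\<theta> E\<^sub>P = -S\<^sub>P E\<^sub>P\<close>, so \<open>f = E\<^sub>P / E\<^sub>Q\<close> has logarithmic
  derivative \<open>h = S\<^sub>Q - S\<^sub>P\<close>, and the claim becomes: a series \<open>f\<close> with \<open>f\<^sub>0 = 1\<close> is \<open>\<equiv> 1\<close>
  modulo \<open>\<aa>\<close> up to degree \<open>m\<close> iff \<open>h\<^sub>n \<in> n\<aa>\<close> for \<open>n \<le> m\<close>. Divided powers provide
  \<open>exp(a X\<^sup>j) = \<Sum>\<^sub>k \<gamma>\<^sub>k(a) X\<^sup>j\<^sup>k \<equiv> 1\<close> for \<open>a \<in> \<aa>\<close>, whose logarithmic derivative is \<open>j a X\<^sup>j\<close>;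
  products of these realise every admissible truncated logarithmic derivative, and since \<open>A\<close> is
  torsion-free a series with constant term 1 is determined, degree by degree, by its logarithmic
  derivative. Finally \<open>e\<^sub>n = 0\<close> beyond the degree.\<close>

lemma ideal_zero: "is_ideal I \<Longrightarrow> 0 \<in> I"
  by (simp add: is_ideal_def)

lemma ideal_add: "is_ideal I \<Longrightarrow> a \<in> I \<Longrightarrow> b \<in> I \<Longrightarrow> a + b \<in> I"
  by (simp add: is_ideal_def)

lemma ideal_mult_left: "is_ideal I \<Longrightarrow> a \<in> I \<Longrightarrow> r * a \<in> I"
  by (simp add: is_ideal_def)

lemma ideal_mult_right: "is_ideal I \<Longrightarrow> a \<in> I \<Longrightarrow> a * r \<in> I"
  by (metis ideal_mult_left mult.commute)

lemma ideal_diff: "is_ideal I \<Longrightarrow> a \<in> I \<Longrightarrow> b \<in> I \<Longrightarrow> a - b \<in> I"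
  using ideal_add[of I a "(-1) * b"] ideal_mult_left[of I b "-1"] by simp

lemma ideal_sum: "is_ideal I \<Longrightarrow> (\<And>x. x \<in> S \<Longrightarrow> f x \<in> I) \<Longrightarrow> sum f S \<in> I"
  by (induction S rule: infinite_finite_induct) (auto simp: ideal_zero ideal_add)

lemma ideal_sign_mult_iff: "is_ideal I \<Longrightarrow> (-1) ^ n * x \<in> I \<longleftrightarrow> x \<in> I"
  using ideal_mult_left[of I "(-1) ^ n * x" "(-1) ^ n"] ideal_mult_left[of I x "(-1) ^ n"]
  by (auto simp flip: mult.assoc power_mult_distrib)

lemma nat_mult_set_iff: "x \<in> nat_mult_set n I \<longleftrightarrow> (\<exists>a\<in>I. x = of_nat n * a)"
  by (auto simp: nat_mult_set_def)

lemma nat_mult_set_diff_commute: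
  "is_ideal I \<Longrightarrow> a - b \<in> nat_mult_set n I \<longleftrightarrow> b - a \<in> nat_mult_set n I"
  unfolding nat_mult_set_iff
  by (metis ideal_mult_left minus_diff_eq mult_minus1 mult_minus_right)

lemma all_le_iff_all_pos_le:
  fixes P :: "nat \<Rightarrow> bool"
  assumes "P 0"
  shows "(\<forall>n\<le>m. P n) \<longleftrightarrow> (\<forall>n. 1 \<le> n \<and> n \<le> m \<longrightarrow> P n)"
proof (intro iffI allI impI)
  fix n assume "\<forall>n. 1 \<le> n \<and> n \<le> m \<longrightarrow> P n" "n \<le> m"
  then show "P n" using assms by (cases n) simp_all
qed simp

lemma all_ge_1_iff_all_upto:
  fixes P :: "nat \<Rightarrow> bool"
  shows "(\<forall>n\<ge>1. P n) \<longleftrightarrow> (\<forall>m. \<forall>n. 1 \<le> n \<and> n \<le> m \<longrightarrow> P n)"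
proof (intro iffI allI impI)
  fix n :: nat assume "\<forall>m k. 1 \<le> k \<and> k \<le> m \<longrightarrow> P k" "1 \<le> n"
  from this(1) have "\<forall>k. 1 \<le> k \<and> k \<le> n \<longrightarrow> P k" by (rule spec)
  then show "P n" using \<open>1 \<le> n\<close> by simp
qed simp

lemma fact_eq_prime_power_mult:
  assumes "prime p"
  shows "\<exists>w. fact k = p ^ (k div p) * fact (k div p) * w \<and> \<not> p dvd w"
proof (induction k)
  case 0
  show ?case using assms by (auto simp: prime_gt_1_nat)
next
  case (Suc k)
  then obtain w where w: "fact k = p ^ (k div p) * fact (k div p) * w" "\<not> p dvd w"
    by blast
  have p1: "p > 1" using assms prime_gt_1_nat by blast
  show ?case
  proof (cases "p dvd Suc k")
    case True
    then obtain q where q: "Suc k = p * q" by blast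
    obtain r where r: "p = Suc r" using p1 by (cases p) auto
    obtain s where s: "q = Suc s" using q by (cases q) auto
    have "k = r + s * p" using q r s by simp
    then have "k div p = s + r div p" using p1 by simp
    then have "k div p = s" using r by simp
    have "fact (Suc k) = Suc k * fact k" by (simp only: fact_Suc of_nat_id)
    also have "\<dots> = p * q * (p ^ s * fact s * w)"
      using w \<open>k div p = s\<close> q by simp
    also have "\<dots> = p ^ q * fact q * w"
      using s by (simp add: fact_Suc algebra_simps)
    finally show ?thesis using w(2) q p1 by auto
  next
    case False
    then have "Suc k div p = k div p" using p1 by (simp add: div_Suc dvd_eq_mod_eq_0)
    moreover have "fact (Suc k) = p ^ (k div p) * fact (k div p) * (w * Suc k)"
      using w(1) by (simp add: fact_Suc algebra_simps)
    moreover have "\<not> p dvd w * Suc k" using w(2) False prime_dvd_mult_iff[OF assms] by blast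
    ultimately show ?thesis by metis
  qed
qed

text \<open>\<open>fps_euler_deriv f = h * f\<close> is read as: \<open>h\<close> is the logarithmic derivative of \<open>f\<close>.\<close>

definition fps_euler_deriv :: "'a::comm_ring_1 fps \<Rightarrow> 'a fps" where
  "fps_euler_deriv f = fps_X * fps_deriv f"

lemma fps_euler_deriv_nth [simp]: "fps_euler_deriv f $ n = of_nat n * f $ n"
  by (cases n) (simp_all add: fps_euler_deriv_def)

lemma fps_euler_deriv_mult:
  "fps_euler_deriv (f * g) = fps_euler_deriv f * g + f * fps_euler_deriv g"
  by (simp add: fps_euler_deriv_def algebra_simps)

lemma fps_euler_deriv_prod:
  assumes "finite J" "\<And>j. j \<in> J \<Longrightarrow> fps_euler_deriv (f j) = g j * f j"
  shows "fps_euler_deriv (prod f J) = sum g J * prod f J"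
  using assms
proof (induction J rule: finite_induct)
  case empty
  then show ?case by (simp add: fps_euler_deriv_def)
next
  case (insert j J)
  then show ?case by (simp add: fps_euler_deriv_mult algebra_simps)
qed

lemma fps_euler_deriv_right_inverse:
  assumes "f * g = 1" "fps_euler_deriv f = h * f"
  shows "fps_euler_deriv g = - (h * g)"
proof -
  have "0 = fps_euler_deriv (f * g)" by (simp add: assms(1) fps_euler_deriv_def)
  also have "\<dots> = f * (h * g + fps_euler_deriv g)"
    by (simp add: fps_euler_deriv_mult assms(2) algebra_simps)
  finally have "g * f * (h * g + fps_euler_deriv g) = 0" by (simp add: mult.assoc)
  then have "h * g + fps_euler_deriv g = 0" using assms(1) by (simp add: mult.commute)
  then show ?thesis by (simp add: eq_neg_iff_add_eq_0 add.commute)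
qed

lemma log_deriv_nth_0:
  assumes "fps_euler_deriv f = h * f" "f $ 0 = 1"
  shows "h $ 0 = 0"
  using arg_cong[OF assms(1), of "\<lambda>f. f $ 0"] assms(2) by simp

lemma log_deriv_nth_diff:
  assumes f: "fps_euler_deriv f = h * f" "f $ 0 = 1"
    and g: "fps_euler_deriv g = k * g" "g $ 0 = 1"
    and "\<forall>i<n. h $ i = k $ i" "\<forall>i<n. 0 < i \<longrightarrow> f $ i = g $ i"
  shows "of_nat n * (f $ n - g $ n) = h $ n - k $ n"
proof -
  have "(\<Sum>i<n. h $ i * f $ (n - i)) = (\<Sum>i<n. k $ i * g $ (n - i))"
  proof (rule sum.cong[OF refl])
    fix i assume "i \<in> {..<n}"
    then show "h $ i * f $ (n - i) = k $ i * g $ (n - i)"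
      using assms(5,6) log_deriv_nth_0[OF f] by (cases "i = 0") auto
  qed
  moreover have "of_nat n * f $ n = h $ n + (\<Sum>i<n. h $ i * f $ (n - i))"
    using arg_cong[OF f(1), of "\<lambda>f. f $ n"] f(2)
    by (simp add: fps_mult_nth atLeast0AtMost lessThan_Suc_atMost[symmetric] add.commute)
  moreover have "of_nat n * g $ n = k $ n + (\<Sum>i<n. k $ i * g $ (n - i))"
    using arg_cong[OF g(1), of "\<lambda>f. f $ n"] g(2)
    by (simp add: fps_mult_nth atLeast0AtMost lessThan_Suc_atMost[symmetric] add.commute)
  ultimately show ?thesis by (simp add: algebra_simps)
qed

lemma log_deriv_unique:
  assumes torsion_free: "\<And>(n::nat) (x::'a::comm_ring_1). n \<noteq> 0 \<Longrightarrow> of_nat n * x = 0 \<Longrightarrow> x = 0"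
    and f: "fps_euler_deriv f = h * f" "f $ 0 = 1"
    and g: "fps_euler_deriv g = k * (g :: 'a fps)" "g $ 0 = 1"
    and "\<forall>i\<le>m. h $ i = k $ i" "n \<le> m"
  shows "f $ n = g $ n"
  using \<open>n \<le> m\<close>
proof (induction n rule: less_induct)
  case (less n)
  have "of_nat n * (f $ n - g $ n) = 0"
    using log_deriv_nth_diff[OF f g, of n] less assms(6) by simp
  then have "n = 0 \<or> f $ n - g $ n = 0" using torsion_free by blast
  then show ?case using f(2) g(2) by auto
qed

lemma fps_sum_monom_nth:
  assumes "finite J"
  shows "(\<Sum>j\<in>J. fps_const (c j) * fps_X ^ j) $ k = (if k \<in> J then c k else 0)"
proof -
  have "(\<Sum>j\<in>J. fps_const (c j) * fps_X ^ j) $ k = (\<Sum>j\<in>J. if j = k then c j else 0)"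
    by (simp add: fps_sum_nth if_distrib eq_commute cong: if_cong)
  also have "\<dots> = (if k \<in> J then c k else 0)"
    using assms by (simp add: sum.delta)
  finally show ?thesis .
qed

lemma fps_prod_nth_0: "finite J \<Longrightarrow> prod f J $ 0 = (\<Prod>j\<in>J. f j $ 0)"
  by (induction J rule: finite_induct) simp_all

lemma fps_mult_nth_in_ideal:
  assumes "is_ideal I" "\<forall>i\<le>n. f $ i \<in> I"
  shows "(f * g) $ n \<in> I"
  unfolding fps_mult_nth using assms by (auto intro!: ideal_sum ideal_mult_right)

lemma prod_minus_one_in_ideal:
  assumes "is_ideal I" "finite J" "\<And>j k. j \<in> J \<Longrightarrow> (f j - 1) $ k \<in> I"
  shows "(prod f J - 1) $ k \<in> I"
  using assms(2,3)
proof (induction J arbitrary: k rule: finite_induct)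
  case empty
  then show ?case using assms(1) by (simp add: ideal_zero)
next
  case (insert j J)
  have "prod f (insert j J) - 1 = (f j - 1) * prod f J + (prod f J - 1)"
    using insert by (simp add: algebra_simps)
  moreover have "((f j - 1) * prod f J) $ k \<in> I"
    using insert assms(1) by (simp add: fps_mult_nth_in_ideal)
  moreover have "(prod f J - 1) $ k \<in> I"
    using insert by simp
  ultimately show ?case
    using assms(1) by (metis fps_add_nth ideal_add)
qed

lemma coeffs_in_ideal_mult_unit_iff:
  assumes "is_ideal I" "u * v = 1"
  shows "(\<forall>n\<le>m. (g * v) $ n \<in> I) \<longleftrightarrow> (\<forall>n\<le>m. g $ n \<in> I)"
proof
  assume gv: "\<forall>n\<le>m. (g * v) $ n \<in> I"
  have "(g * v * u) $ n \<in> I" if "n \<le> m" for n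
    using gv that by (intro fps_mult_nth_in_ideal[OF assms(1)]) auto
  then show "\<forall>n\<le>m. g $ n \<in> I"
    using assms(2) by (simp only: mult.assoc mult.commute[of v u] mult_1_right) blast
next
  assume g: "\<forall>n\<le>m. g $ n \<in> I"
  show "\<forall>n\<le>m. (g * v) $ n \<in> I"
    using g by (intro allI impI fps_mult_nth_in_ideal[OF assms(1)]) auto
qed

text \<open>For \<open>P = \<Prod>(X - \<alpha>\<^sub>i)\<close> this is the reversed polynomial \<open>\<Prod>(1 - \<alpha>\<^sub>i X)\<close>.\<close>

definition esym_series :: "'a::comm_ring_1 poly \<Rightarrow> 'a fps" where
  "esym_series P = Abs_fps (\<lambda>n. (-1) ^ n * esym P n)"

definition psum_series :: "'a::comm_ring_1 poly \<Rightarrow> 'a fps" where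
  "psum_series P = Abs_fps (psum P)"

lemma psum_0 [simp]: "psum P 0 = 0"
  by (simp add: psum.simps)

lemma esym_series_nth_0: "lead_coeff P = 1 \<Longrightarrow> esym_series P $ 0 = 1"
  by (simp add: esym_series_def esym_def)

lemma esym_0: "lead_coeff P = 1 \<Longrightarrow> esym P 0 = 1"
  by (simp add: esym_def)

lemma esym_eq_0: "degree P < n \<Longrightarrow> esym P n = 0"
  by (simp add: esym_def)

lemma esym_congruent_iff_upto_max_degree:
  assumes "is_ideal I"
  shows "(\<forall>n\<ge>1. esym P n - esym Q n \<in> I) \<longleftrightarrow>
    (\<forall>n. 1 \<le> n \<and> n \<le> max (degree P) (degree Q) \<longrightarrow> esym P n - esym Q n \<in> I)"
proof (intro iffI allI impI)
  fix n :: nat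
  assume upto: "\<forall>n. 1 \<le> n \<and> n \<le> max (degree P) (degree Q) \<longrightarrow> esym P n - esym Q n \<in> I"
    and "1 \<le> n"
  show "esym P n - esym Q n \<in> I"
  proof (cases "n \<le> max (degree P) (degree Q)")
    case True
    then show ?thesis using upto \<open>1 \<le> n\<close> by simp
  next
    case False
    then show ?thesis using ideal_zero[OF assms] by (simp add: esym_eq_0)
  qed
qed simp

lemma fps_euler_deriv_esym_series:
  assumes "lead_coeff P = 1"
  shows "fps_euler_deriv (esym_series P) = - (psum_series P * esym_series P)"
proof (rule fps_ext)
  fix n
  show "fps_euler_deriv (esym_series P) $ n = (- (psum_series P * esym_series P)) $ n"
  proof (cases n)
    case 0
    then show ?thesis by (simp add: psum_series_def)
  next
    case (Suc m)
    define t where "t i = esym_series P $ i * psum_series P $ (n - i)" for i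
    have "(psum_series P * esym_series P) $ n = sum t {0..n}"
      by (simp add: fps_mult_nth t_def mult.commute)
    also have "\<dots> = t 0 + sum t {1..m} + t n"
      using Suc by (simp add: sum.atLeast0_atMost_Suc sum.atLeast_Suc_atMost)
    also have "t 0 = psum P n"
      using assms by (simp add: t_def esym_series_def psum_series_def esym_def)
    also have "t n = 0" by (simp add: t_def psum_series_def)
    also have "psum P n = (\<Sum>i\<in>{1..m}. (-1) ^ (i - 1) * esym P i * psum P (n - i))
        + (-1) ^ (n - 1) * of_nat n * esym P n"
      using Suc by (subst psum.simps) (simp add: atLeastLessThanSuc_atLeastAtMost)
    also have "(\<Sum>i\<in>{1..m}. (-1) ^ (i - 1) * esym P i * psum P (n - i)) = - sum t {1..m}"
      unfolding sum_negf[symmetric]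
    proof (rule sum.cong[OF refl])
      fix i assume "i \<in> {1..m}"
      then obtain j where "i = Suc j" by (cases i) auto
      then show "(-1) ^ (i - 1) * esym P i * psum P (n - i) = - t i"
        by (simp add: t_def esym_series_def psum_series_def)
    qed
    finally have "(psum_series P * esym_series P) $ n = (-1) ^ (n - 1) * of_nat n * esym P n"
      by simp
    then show ?thesis using Suc by (simp add: esym_series_def)
  qed
qed

locale divided_power_algebra =
  fixes p :: nat and I :: "'a::comm_ring_1 set"
  assumes prime_p: "prime p"
    and torsion_free: "torsion_free_Zp_algebra p TYPE('a)"
    and divided_power: "divided_power_ideal p I"
begin

lemma ideal: "is_ideal I"
  using divided_power by (simp add: divided_power_ideal_def)

lemma of_nat_mult_eq_0D: "n \<noteq> 0 \<Longrightarrow> of_nat n * x = 0 \<Longrightarrow> x = (0::'a)"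
  using torsion_free unfolding torsion_free_Zp_algebra_def by (metis of_int_of_nat_eq of_nat_0_eq_iff)

lemma of_nat_invertible: "\<not> p dvd w \<Longrightarrow> \<exists>b::'a. of_nat w * b = 1"
  using torsion_free unfolding torsion_free_Zp_algebra_def by (metis int_dvd_int_iff of_int_of_nat_eq)

text \<open>Write \<open>k = q p + r\<close>. Then \<open>k! = p\<^sup>q q! w\<close> with \<open>w\<close> prime to \<open>p\<close>, hence a unit, and
  \<open>a\<^sup>k = a\<^sup>r (p b)\<^sup>q\<close> with \<open>b \<in> \<aa>\<close>; apply the induction hypothesis to \<open>b\<^sup>q\<close>.\<close>

lemma power_eq_fact_mult:
  "a \<in> I \<Longrightarrow> 1 \<le> k \<Longrightarrow> \<exists>c\<in>I. a ^ k = of_nat (fact k) * c"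
proof (induction k arbitrary: a rule: less_induct)
  case (less k)
  obtain w where w: "fact k = p ^ (k div p) * fact (k div p) * w" "\<not> p dvd w"
    using fact_eq_prime_power_mult[OF prime_p] by blast
  obtain v :: 'a where v: "of_nat w * v = 1"
    using of_nat_invertible[OF w(2)] by blast
  show ?case
  proof (cases "k div p = 0")
    case True
    have "a ^ k = a * a ^ (k - 1)"
      using less.prems(2) by (simp flip: power_Suc)
    then have "a ^ k \<in> I" using ideal less.prems(1) by (simp add: ideal_mult_right)
    moreover have "a ^ k = of_nat (fact k) * (v * a ^ k)"
      using True w(1) v by (simp flip: mult.assoc)
    ultimately show ?thesis using ideal by (blast intro: ideal_mult_left)
  next
    case False
    define q where "q = k div p"
    have "1 \<le> q" "q < k"
      using False less.prems(2) prime_gt_1_nat[OF prime_p] by (simp_all add: q_def)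
    obtain b where b: "b \<in> I" "a ^ p = of_nat p * b"
      using divided_power less.prems(1) unfolding divided_power_ideal_def nat_mult_set_def by blast
    obtain c where c: "c \<in> I" "b ^ q = of_nat (fact q) * c"
      using less.IH[OF \<open>q < k\<close> b(1) \<open>1 \<le> q\<close>] by blast
    have "a ^ k = a ^ (k mod p) * (a ^ p) ^ q"
      by (simp add: q_def flip: power_add power_mult)
    also have "\<dots> = of_nat (p ^ q * fact q) * (of_nat w * v) * (a ^ (k mod p) * c)"
      using b(2) c(2) v by (simp add: power_mult_distrib algebra_simps)
    also have "\<dots> = of_nat (fact k) * (v * (a ^ (k mod p) * c))"
      using w(1) by (simp add: q_def algebra_simps)
    finally show ?thesis using ideal c(1) by (blast intro: ideal_mult_left)
  qed
qed

text \<open>The divided power \<open>\<gamma>\<^sub>k(a) = a\<^sup>k / k!\<close>; torsion-freeness makes the choice unique.\<close>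

definition dpow :: "'a \<Rightarrow> nat \<Rightarrow> 'a" where
  "dpow a k = (if k = 0 then 1 else SOME c. c \<in> I \<and> a ^ k = of_nat (fact k) * c)"

lemma dpow_in_ideal_and_power_eq:
  assumes "a \<in> I" "1 \<le> k"
  shows "dpow a k \<in> I \<and> a ^ k = of_nat (fact k) * dpow a k"
  using someI_ex[OF power_eq_fact_mult[OF assms, unfolded Bex_def]] assms(2) by (simp add: dpow_def)

lemma dpow_in_ideal: "a \<in> I \<Longrightarrow> 1 \<le> k \<Longrightarrow> dpow a k \<in> I"
  using dpow_in_ideal_and_power_eq by blast

lemma power_eq_fact_mult_dpow: "a \<in> I \<Longrightarrow> a ^ k = of_nat (fact k) * dpow a k"
  using dpow_in_ideal_and_power_eq[of a k] by (cases k) (simp_all add: dpow_def)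

lemma of_nat_mult_dpow_Suc:
  assumes "a \<in> I"
  shows "of_nat (Suc k) * dpow a (Suc k) = a * dpow a k"
proof -
  have "of_nat (fact k) * (of_nat (Suc k) * dpow a (Suc k)) = a * a ^ k"
    using power_eq_fact_mult_dpow[OF assms, of "Suc k"] by (simp add: fact_Suc algebra_simps)
  also have "\<dots> = of_nat (fact k) * (a * dpow a k)"
    using power_eq_fact_mult_dpow[OF assms, of k] by (simp add: algebra_simps)
  finally have "of_nat (fact k) * (of_nat (Suc k) * dpow a (Suc k) - a * dpow a k) = 0"
    by (simp add: algebra_simps)
  then have "of_nat (Suc k) * dpow a (Suc k) - a * dpow a k = 0"
    by (rule of_nat_mult_eq_0D[rotated]) simp
  then show ?thesis by simp
qed

definition exp_series :: "'a \<Rightarrow> nat \<Rightarrow> 'a fps" where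
  "exp_series a j = Abs_fps (\<lambda>i. if j dvd i then dpow a (i div j) else 0)"

lemma exp_series_nth_0 [simp]: "exp_series a j $ 0 = 1"
  by (simp add: exp_series_def dpow_def)

lemma exp_series_minus_one_nth_in_ideal:
  assumes "a \<in> I" "1 \<le> j"
  shows "(exp_series a j - 1) $ k \<in> I"
  using assms dpow_in_ideal[OF assms(1), of "k div j"] ideal_zero[OF ideal]
  by (cases "k = 0") (auto simp: exp_series_def dpow_def elim!: dvdE)

lemma fps_euler_deriv_exp_series:
  assumes "a \<in> I" "1 \<le> j"
  shows "fps_euler_deriv (exp_series a j) = fps_const (of_nat j * a) * fps_X ^ j * exp_series a j"
proof (rule fps_ext)
  fix i
  have rhs: "(fps_const (of_nat j * a) * fps_X ^ j * exp_series a j) $ i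
     = of_nat j * a * (if i < j then 0 else exp_series a j $ (i - j))"
    by (simp add: mult.assoc fps_X_power_mult_nth)
  show "fps_euler_deriv (exp_series a j) $ i = (fps_const (of_nat j * a) * fps_X ^ j * exp_series a j) $ i"
  proof (cases "j dvd i")
    case True
    then obtain k where k: "i = j * k" by blast
    show ?thesis
    proof (cases k)
      case 0
      then show ?thesis using k assms rhs by simp
    next
      case (Suc l)
      have "of_nat i * dpow a k = of_nat j * (of_nat (Suc l) * dpow a (Suc l))"
        using k Suc by (simp only: of_nat_mult mult.assoc)
      also have "\<dots> = of_nat j * a * dpow a l"
        using of_nat_mult_dpow_Suc[OF assms(1)] by (simp add: mult.assoc)
      finally have "of_nat i * dpow a k = of_nat j * a * dpow a l" .
      moreover have "i - j = j * l" "\<not> i < j" using k Suc by (simp_all add: algebra_simps)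
      ultimately show ?thesis
        using k assms rhs by (simp add: exp_series_def)
    qed
  next
    case False
    then have "\<not> i < j \<Longrightarrow> \<not> j dvd (i - j)"
      by (metis dvd_add_triv_right_iff le_add_diff_inverse2 not_less)
    then show ?thesis using False rhs by (simp add: exp_series_def)
  qed
qed

lemma truncated_log_deriv_realisable:
  assumes "\<forall>k\<le>m. h $ k \<in> nat_mult_set k I"
  obtains V F where "fps_euler_deriv V = F * V" "V $ 0 = 1" "\<And>k. (V - 1) $ k \<in> I"
    "\<And>k. F $ k = (if k \<le> m then h $ k else 0)"
proof -
  obtain a where a: "\<And>k. k \<le> m \<Longrightarrow> a k \<in> I \<and> h $ k = of_nat k * a k"
  proof -
    have "\<forall>k\<in>{..m}. \<exists>c. c \<in> I \<and> h $ k = of_nat k * c"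
      using assms by (auto simp: nat_mult_set_iff)
    from bchoice[OF this] obtain a where "\<forall>k\<in>{..m}. a k \<in> I \<and> h $ k = of_nat k * a k"
      by blast
    then show ?thesis by (intro that[of a]) auto
  qed
  define V where "V = (\<Prod>j\<in>{1..m}. exp_series (a j) j)"
  define F where "F = (\<Sum>j\<in>{1..m}. fps_const (of_nat j * a j) * fps_X ^ j)"
  have "fps_euler_deriv V = F * V"
    unfolding V_def F_def
  proof (rule fps_euler_deriv_prod[OF finite_atLeastAtMost])
    fix j assume "j \<in> {1..m}"
    then have j: "j \<le> m" "1 \<le> j" by simp_all
    show "fps_euler_deriv (exp_series (a j) j) = fps_const (of_nat j * a j) * fps_X ^ j * exp_series (a j) j"
      by (rule fps_euler_deriv_exp_series[OF conjunct1[OF a[OF j(1)]] j(2)])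
  qed
  moreover have "V $ 0 = 1"
    unfolding V_def by (simp add: fps_prod_nth_0)
  moreover have "(V - 1) $ k \<in> I" for k
    unfolding V_def
  proof (rule prod_minus_one_in_ideal[OF ideal finite_atLeastAtMost])
    fix j k assume "j \<in> {1..m}"
    then have j: "j \<le> m" "1 \<le> j" by simp_all
    show "(exp_series (a j) j - 1) $ k \<in> I"
      by (rule exp_series_minus_one_nth_in_ideal[OF conjunct1[OF a[OF j(1)]] j(2)])
  qed
  moreover have "F $ k = (if k \<le> m then h $ k else 0)" for k
  proof -
    have "F $ k = (if k \<in> {1..m} then of_nat k * a k else 0)"
      unfolding F_def by (rule fps_sum_monom_nth) simp
    also have "\<dots> = (if k \<le> m then h $ k else 0)"
      using a[of k] by (cases "k = 0"; cases "k \<le> m") simp_all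
    finally show ?thesis .
  qed
  ultimately show thesis by (rule that)
qed

lemma coeffs_in_ideal_iff_log_deriv:
  assumes f: "fps_euler_deriv f = h * f" "f $ 0 = 1"
  shows "(\<forall>n\<le>m. (f - 1) $ n \<in> I) \<longleftrightarrow> (\<forall>n\<le>m. h $ n \<in> nat_mult_set n I)"
proof
  assume h: "\<forall>n\<le>m. h $ n \<in> nat_mult_set n I"
  obtain V F where V: "fps_euler_deriv V = F * V" "V $ 0 = 1" "\<And>k. (V - 1) $ k \<in> I"
    and F: "\<And>k. F $ k = (if k \<le> m then h $ k else 0)"
    using truncated_log_deriv_realisable[OF h] by blast
  have agree: "\<forall>i\<le>m. h $ i = F $ i" using F by simp
  have "f $ n = V $ n" if "n \<le> m" for n
    by (rule log_deriv_unique[OF of_nat_mult_eq_0D f V(1,2) agree that])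
  then show "\<forall>n\<le>m. (f - 1) $ n \<in> I"
    using V(3) by (metis fps_sub_nth)
next
  assume f1: "\<forall>n\<le>m. (f - 1) $ n \<in> I"
  show "\<forall>n\<le>m. h $ n \<in> nat_mult_set n I"
  proof (intro allI impI)
    fix n assume "n \<le> m"
    then show "h $ n \<in> nat_mult_set n I"
    proof (induction n rule: less_induct)
      case (less n)
      show ?case
      proof (cases "n = 0")
        case True
        then show ?thesis
          using log_deriv_nth_0[OF f] ideal_zero[OF ideal] by (auto simp: nat_mult_set_iff)
      next
        case False
        \<comment> \<open>\<open>V\<close> realises \<open>h\<close> below \<open>n\<close>, hence agrees with \<open>f\<close> there; the \<open>n\<close>-th coefficients
            then give \<open>h\<^sub>n = n (f\<^sub>n - V\<^sub>n)\<close>.\<close>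
        have "\<forall>k\<le>n - 1. h $ k \<in> nat_mult_set k I"
          using less False by simp
        then obtain V F where V: "fps_euler_deriv V = F * V" "V $ 0 = 1" "\<And>k. (V - 1) $ k \<in> I"
          and F: "\<And>k. F $ k = (if k \<le> n - 1 then h $ k else 0)"
          using truncated_log_deriv_realisable by blast
        have agree: "\<forall>i\<le>n - 1. F $ i = h $ i" using F by simp
        have "V $ i = f $ i" if "i < n" for i
          using log_deriv_unique[OF of_nat_mult_eq_0D V(1,2) f agree] that by simp
        then have "\<forall>i<n. 0 < i \<longrightarrow> f $ i = V $ i" by simp
        moreover have "\<forall>i<n. h $ i = F $ i" using agree by simp
        ultimately have "of_nat n * (f $ n - V $ n) = h $ n - F $ n"
          by (intro log_deriv_nth_diff[OF f V(1,2)])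
        then have "h $ n = of_nat n * ((f - 1) $ n - (V - 1) $ n)"
          using F[of n] False by simp
        moreover have "(f - 1) $ n - (V - 1) $ n \<in> I"
          using f1 less.prems V(3) by (blast intro: ideal_diff[OF ideal])
        ultimately show ?thesis by (auto simp: nat_mult_set_iff)
      qed
    qed
  qed
qed

lemma esym_congruent_iff_psum_congruent:
  assumes P: "lead_coeff P = 1" and Q: "lead_coeff Q = 1"
  shows "(\<forall>n. 1 \<le> n \<and> n \<le> m \<longrightarrow> esym P n - esym Q n \<in> I) \<longleftrightarrow>
         (\<forall>n. 1 \<le> n \<and> n \<le> m \<longrightarrow> psum P n - psum Q n \<in> nat_mult_set n I)"
proof -
  define R where "R = fps_right_inverse (esym_series Q) 1"
  have R: "esym_series Q * R = 1"
    unfolding R_def by (rule fps_right_inverse) (simp add: esym_series_nth_0[OF Q])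
  define f where "f = esym_series P * R"
  have f0: "f $ 0 = 1"
    using esym_series_nth_0[OF P] by (simp add: f_def R_def fps_lr_inverse_nth_0)
  have "fps_euler_deriv (esym_series Q) = - psum_series Q * esym_series Q"
    using fps_euler_deriv_esym_series[OF Q] by simp
  from fps_euler_deriv_right_inverse[OF R this]
  have "fps_euler_deriv R = psum_series Q * R" by simp
  then have df: "fps_euler_deriv f = (psum_series Q - psum_series P) * f"
    unfolding f_def using fps_euler_deriv_esym_series[OF P]
    by (simp add: fps_euler_deriv_mult algebra_simps)
  have esym_diff: "esym_series P $ n - esym_series Q $ n = (-1) ^ n * (esym P n - esym Q n)" for n
    by (simp add: esym_series_def right_diff_distrib)
  have "(\<forall>n. 1 \<le> n \<and> n \<le> m \<longrightarrow> esym P n - esym Q n \<in> I)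
      \<longleftrightarrow> (\<forall>n. 1 \<le> n \<and> n \<le> m \<longrightarrow> (esym_series P - esym_series Q) $ n \<in> I)"
    by (simp add: esym_diff ideal_sign_mult_iff[OF ideal])
  also have "\<dots> \<longleftrightarrow> (\<forall>n\<le>m. (esym_series P - esym_series Q) $ n \<in> I)"
    by (rule all_le_iff_all_pos_le[symmetric]) (simp add: esym_diff esym_0 P Q ideal_zero[OF ideal])
  also have "esym_series P - esym_series Q = (f - 1) * esym_series Q"
  proof -
    have "(f - 1) * esym_series Q = esym_series P * (esym_series Q * R) - esym_series Q"
      by (simp add: f_def algebra_simps)
    then show ?thesis using R by simp
  qed
  also have "(\<forall>n\<le>m. ((f - 1) * esym_series Q) $ n \<in> I) \<longleftrightarrow> (\<forall>n\<le>m. (f - 1) $ n \<in> I)"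
    using R by (intro coeffs_in_ideal_mult_unit_iff[OF ideal, of R]) (simp add: mult.commute)
  also have "\<dots> \<longleftrightarrow> (\<forall>n\<le>m. (psum_series Q - psum_series P) $ n \<in> nat_mult_set n I)"
    by (rule coeffs_in_ideal_iff_log_deriv[OF df f0])
  also have "\<dots> \<longleftrightarrow> (\<forall>n. 1 \<le> n \<and> n \<le> m \<longrightarrow> (psum_series Q - psum_series P) $ n \<in> nat_mult_set n I)"
    by (rule all_le_iff_all_pos_le)
      (use ideal_zero[OF ideal] in \<open>auto simp: psum_series_def nat_mult_set_iff\<close>)
  also have "\<dots> \<longleftrightarrow> (\<forall>n. 1 \<le> n \<and> n \<le> m \<longrightarrow> psum P n - psum Q n \<in> nat_mult_set n I)"
    by (simp add: psum_series_def nat_mult_set_diff_commute[OF ideal])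
  finally show ?thesis .
qed

end

theorem theorem2p7:
  fixes p :: nat and I :: "'a::comm_ring_1 set" and P Q :: "'a poly"
  assumes "prime p"
    and "torsion_free_Zp_algebra p TYPE('a)"
    and "divided_power_ideal p I"
    and "lead_coeff P = 1" and "lead_coeff Q = 1"
  defines "N \<equiv> max (degree P) (degree Q)"
  shows "((\<forall>n\<ge>1. esym P n - esym Q n \<in> I) \<longleftrightarrow>
           (\<forall>n. 1 \<le> n \<and> n \<le> N \<longrightarrow> esym P n - esym Q n \<in> I))
       \<and> ((\<forall>n. 1 \<le> n \<and> n \<le> N \<longrightarrow> esym P n - esym Q n \<in> I) \<longleftrightarrow>
           (\<forall>n\<ge>1. psum P n - psum Q n \<in> nat_mult_set n I))
       \<and> ((\<forall>n\<ge>1. psum P n - psum Q n \<in> nat_mult_set n I) \<longleftrightarrow>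
           (\<forall>n. 1 \<le> n \<and> n \<le> N \<longrightarrow> psum P n - psum Q n \<in> nat_mult_set n I))"
proof -
  interpret divided_power_algebra p I
    using assms(1-3) by unfold_locales
  have esym_iff_psum: "(\<forall>n\<ge>1. esym P n - esym Q n \<in> I) \<longleftrightarrow>
      (\<forall>n\<ge>1. psum P n - psum Q n \<in> nat_mult_set n I)"
    unfolding all_ge_1_iff_all_upto[of "\<lambda>n. esym P n - esym Q n \<in> I"]
      all_ge_1_iff_all_upto[of "\<lambda>n. psum P n - psum Q n \<in> nat_mult_set n I"]
    by (intro all_cong1 esym_congruent_iff_psum_congruent[OF assms(4,5)])
  show ?thesis
    using esym_congruent_iff_upto_max_degree[OF ideal, of P Q, folded N_def] esym_iff_psum
      esym_congruent_iff_psum_congruent[OF assms(4,5), of N]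
    by argo
qed

end
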